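(* Let $\mathcal A\in\mathbb C^{n_1\times n_2\times n_3}$. Then $$\mathcal A\{-,*\}\,(\mathcal A^\dagger)^*\,\mathcal A\{-,*\}\subseteq\mathcal A\{-,*\},$$ i.e. for all $\mathcal U,\mathcal V\in\mathcal A\{-,*\}$ one has $\mathcal U(\mathcal A^\dagger)^*\mathcal V\in\mathcal A\{-,*\}$.
   Context: Fix a nonsingular matrix $M\in\mathbb C^{n_3\times n_3}$. For $\mathcal C\in\mathbb C^{n_1\times n_2\times n_3}$ let $\widehat{\mathcal C}=\mathcal C\times_3M$, i.e. $\widehat{\mathcal C}_{ijk}=\sum_{l=1}^{n_3}M_{kl}\mathcal C_{ijl}$, and let $\widehat{\mathcal C}^{(i)}$ denote its $i$-th frontal slice. The M-product $\mathcal C\star_M\mathcal D$ of $\mathcal C\in\mathbb C^{n_1\times n_2\times n_3}$ and $\mathcal D\in\mathbb C^{n_2\times l\times n_3}$ is the unique tensor with $\widehat{\mathcal C\star_M\mathcal D}^{(i)}=\widehat{\mathcal C}^{(i)}\widehat{\mathcal D}^{(i)}$ for all $i\in[n_3]$. Juxtaposition of tensors denotes the M-product. The conjugate transpose $\mathcal A^*$ is defined by $\widehat{\mathcal A^*}^{(i)}=(\widehat{\mathcal A}^{(i)})^*$. The Moore–Penrose inverse $\mathcal A^\dagger$ is the unique $\mathcal W$ satisfying $\mathcal A\mathcal W\mathcal A=\mathcal A$, $\mathcal W\mathcal A\mathcal W=\mathcal W$, $(\mathcal A\mathcal W)^*=\mathcal A\mathcal W$, $(\mathcal W\mathcal A)^*=\mathcal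 W\mathcal A$. $\mathcal A\{1\}$ is the set of all $\mathcal W$ with $\mathcal A\mathcal W\mathcal A=\mathcal A$. The set of 1-Star inverses is $\mathcal A\{-,*\}=\{\mathcal A^-\mathcal A\mathcal A^*:\mathcal A^-\in\mathcal A\{1\}\}$. *)

theory Defs
  imports "HOL-Analysis.Analysis"
begin

text \<open>A third-order tensor in C^(n1 x n2 x n3) is represented as the family of its
  frontal slices: T $ k $ i $ j is the entry (i,j,k).  Dimensions are finite types.\<close>
type_synonym ('n1, 'n2, 'n3) tensor = "complex ^ 'n2 ^ 'n1 ^ 'n3"

definition mode3 :: "complex ^ 'n3::finite ^ 'n3 \<Rightarrow> ('n1::finite, 'n2::finite, 'n3) tensor \<Rightarrow> ('n1, 'n2, 'n3) tensor" where
  "mode3 M C = (\<chi> k i j. \<Sum>l\<in>UNIV. M $ k $ l * C $ l $ i $ j)"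

definition cmat_adj :: "complex ^ 'n::finite ^ 'm::finite \<Rightarrow> complex ^ 'm ^ 'n" where
  "cmat_adj X = (\<chi> i j. cnj (X $ j $ i))"

definition mprod :: "complex ^ 'n3::finite ^ 'n3 \<Rightarrow> ('n1::finite, 'n2::finite, 'n3) tensor \<Rightarrow> ('n2, 'l::finite, 'n3) tensor
    \<Rightarrow> ('n1, 'l, 'n3) tensor" where
  "mprod M C D = mode3 (matrix_inv M) (\<chi> k. (mode3 M C $ k) ** (mode3 M D $ k))"

definition tadj :: "complex ^ 'n3::finite ^ 'n3 \<Rightarrow> ('n1::finite, 'n2::finite, 'n3) tensor \<Rightarrow> ('n2, 'n1, 'n3) tensor" where
  "tadj M A = mode3 (matrix_inv M) (\<chi> k. cmat_adj (mode3 M A $ k))"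

definition is_mp_inverse :: "complex ^ 'n3::finite ^ 'n3 \<Rightarrow> ('n1::finite, 'n2::finite, 'n3) tensor \<Rightarrow> ('n2, 'n1, 'n3) tensor \<Rightarrow> bool" where
  "is_mp_inverse M A W \<longleftrightarrow>
     mprod M (mprod M A W) A = A \<and>
     mprod M (mprod M W A) W = W \<and>
     tadj M (mprod M A W) = mprod M A W \<and>
     tadj M (mprod M W A) = mprod M W A"

definition mp_inverse :: "complex ^ 'n3::finite ^ 'n3 \<Rightarrow> ('n1::finite, 'n2::finite, 'n3) tensor \<Rightarrow> ('n2, 'n1, 'n3) tensor" where
  "mp_inverse M A = (THE W. is_mp_inverse M A W)"

definition inv1 :: "complex ^ 'n3::finite ^ 'n3 \<Rightarrow> ('n1::finite, 'n2::finite, 'n3) tensor \<Rightarrow> ('n2, 'n1, 'n3) tensor set" where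
  "inv1 M A = {W. mprod M (mprod M A W) A = A}"

definition one_star_inverses :: "complex ^ 'n3::finite ^ 'n3 \<Rightarrow> ('n1::finite, 'n2::finite, 'n3) tensor \<Rightarrow> ('n2, 'n1, 'n3) tensor set" where
  "one_star_inverses M A = {mprod M (mprod M G A) (tadj M A) | G. G \<in> inv1 M A}"

end

theory Submission
  imports Defs
begin

text \<open>Every notion involved acts slice by slice in the transform domain, where the M-product,
  the adjoint and the Moore-Penrose inverse become those of ordinary complex matrices. Writing
  \<open>U = G A A\<^sup>*\<close> and \<open>V = H A A\<^sup>*\<close> with \<open>G, H \<in> A{1}\<close>, the identity
  \<open>A A\<^sup>* (A\<^sup>\<dagger>)\<^sup>* = A (A\<^sup>\<dagger> A)\<^sup>* = A A\<^sup>\<dagger> A = A\<close> gives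
  \<open>U (A\<^sup>\<dagger>)\<^sup>* V = (G A H) A A\<^sup>*\<close>, and \<open>G A H \<in> A{1}\<close> since \<open>A G A H A = A H A = A\<close>.
  The Moore-Penrose inverse of a matrix exists because \<open>A\<^sup>*A X = A\<^sup>*A Y\<close> implies \<open>A X = A Y\<close>.\<close>

lemma invertible_matrix_inv:
  assumes "invertible (M::'a::semiring_1^'n^'m)"
  shows "M ** matrix_inv M = mat 1" "matrix_inv M ** M = mat 1"
proof -
  have "\<exists>N. M ** N = mat 1 \<and> N ** M = mat 1" using assms by (simp add: invertible_def)
  from someI_ex[OF this] show "M ** matrix_inv M = mat 1" "matrix_inv M ** M = mat 1"
    by (simp_all add: matrix_inv_def)
qed

lemma cmat_adj_cmat_adj [simp]: "cmat_adj (cmat_adj X) = X"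
  by (simp add: cmat_adj_def vec_eq_iff)

lemma cmat_adj_mult: "cmat_adj (X ** Y) = cmat_adj Y ** cmat_adj X"
  by (simp add: cmat_adj_def vec_eq_iff matrix_matrix_mult_def mult.commute)

lemma matrix_mul_diff_distrib: "(A::'a::ring_1^'n^'m) ** (X - Y) = A ** X - A ** Y"
  by (simp add: vec_eq_iff matrix_matrix_mult_def right_diff_distrib sum_subtractf)

lemma matrix_mul_rzero [simp]: "(A::'a::semiring_1^'n^'m) ** (0::'a^'k^'n) = 0"
  by (simp add: vec_eq_iff matrix_matrix_mult_def)

lemma cmat_adj_mult_self_eq_0:
  fixes E :: "complex^'n^'m"
  assumes "cmat_adj E ** E = 0"
  shows "E = 0"
proof -
  have "E $ i $ j = 0" for i j
  proof -
    have "(\<Sum>l\<in>UNIV. cnj (E $ l $ j) * E $ l $ j) = 0"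
      using assms by (simp add: vec_eq_iff matrix_matrix_mult_def cmat_adj_def)
    moreover have "(\<Sum>l\<in>UNIV. cnj (E $ l $ j) * E $ l $ j) = of_real (\<Sum>l\<in>UNIV. (norm (E $ l $ j))\<^sup>2)"
      unfolding of_real_sum by (rule sum.cong[OF refl]) (simp only: complex_norm_square mult.commute)
    ultimately have "(\<Sum>l\<in>UNIV. (norm (E $ l $ j))\<^sup>2) = 0"
      by (metis of_real_eq_0_iff)
    then show ?thesis
      by (simp add: sum_nonneg_eq_0_iff)
  qed
  then show ?thesis by (simp add: vec_eq_iff)
qed

lemma gram_mult_cancel:
  fixes A :: "complex^'n^'m" and X Y :: "complex^'k^'n"
  assumes "cmat_adj A ** A ** X = cmat_adj A ** A ** Y"
  shows "A ** X = A ** Y"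
proof -
  let ?E = "A ** (X - Y)"
  have "cmat_adj A ** ?E = 0"
    using assms by (simp add: matrix_mul_diff_distrib matrix_mul_assoc)
  then have "cmat_adj ?E ** ?E = 0"
    by (simp add: cmat_adj_mult flip: matrix_mul_assoc)
  then have "?E = 0" by (rule cmat_adj_mult_self_eq_0)
  then show ?thesis by (simp add: matrix_mul_diff_distrib)
qed

lemma exists_inner_inverse: "\<exists>G. (A::'a::field^'n^'m) ** G ** A = A"
proof -
  obtain g where g: "Vector_Spaces.linear (*s) (*s) g" "\<forall>v\<in>range ((*v) A). A *v g v = v"
    using vec.linear_exists_right_inverse_on[OF matrix_vector_mul_linear_gen vec.subspace_UNIV, of A]
    by auto
  have "A ** matrix g ** A = A"
    unfolding matrix_eq
    by (simp add: matrix_vector_mul_assoc[symmetric] matrix_works[OF g(1)] g(2))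
  then show ?thesis by blast
qed

text \<open>A \<open>{1,3}\<close>-inverse: \<open>P A\<^sup>*\<close> for a hermitian \<open>{1}\<close>-inverse \<open>P\<close> of the Gram matrix \<open>A\<^sup>*A\<close>.\<close>

lemma exists_inner_inverse_hermitian:
  "\<exists>Y. (A::complex^'n^'m) ** Y ** A = A \<and> cmat_adj (A ** Y) = A ** Y"
proof -
  define C where "C = cmat_adj A ** A"
  have C_herm: "cmat_adj C = C" by (simp add: cmat_adj_mult C_def)
  obtain P0 where P0: "C ** P0 ** C = C" using exists_inner_inverse by blast
  have P0_adj: "C ** cmat_adj P0 ** C = C"
    using arg_cong[OF P0, of cmat_adj] by (simp add: cmat_adj_mult matrix_mul_assoc C_herm)
  define P where "P = P0 ** C ** cmat_adj P0"
  have P_herm: "cmat_adj P = P" by (simp add: P_def cmat_adj_mult matrix_mul_assoc C_herm)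
  have "C ** P ** C = (C ** P0 ** C) ** cmat_adj P0 ** C"
    by (simp add: P_def matrix_mul_assoc)
  then have "C ** P ** C = C" by (simp add: P0 P0_adj)
  then have "cmat_adj A ** A ** (P ** cmat_adj A ** A) = cmat_adj A ** A ** mat 1"
    by (simp add: matrix_mul_assoc C_def)
  then have "A ** (P ** cmat_adj A) ** A = A"
    using gram_mult_cancel by (metis matrix_mul_assoc matrix_mul_rid)
  moreover have "cmat_adj (A ** (P ** cmat_adj A)) = A ** (P ** cmat_adj A)"
    by (simp add: cmat_adj_mult P_herm matrix_mul_assoc)
  ultimately show ?thesis by blast
qed

definition penrose_inverse :: "complex^'n^'m \<Rightarrow> complex^'m^'n \<Rightarrow> bool" where
  "penrose_inverse A W \<longleftrightarrow> A ** W ** A = A \<and> W ** A ** W = W \<and>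
     cmat_adj (A ** W) = A ** W \<and> cmat_adj (W ** A) = W ** A"

text \<open>\<open>Z A Y\<close> where \<open>Y\<close> is a \<open>{1,3}\<close>-inverse of \<open>A\<close> and \<open>Z\<^sup>*\<close> one of \<open>A\<^sup>*\<close>.\<close>

lemma exists_penrose_inverse: "\<exists>W. penrose_inverse (A::complex^'n^'m) W"
proof -
  obtain Y where Y: "A ** Y ** A = A" "cmat_adj (A ** Y) = A ** Y"
    using exists_inner_inverse_hermitian by blast
  obtain Y' where Y': "cmat_adj A ** Y' ** cmat_adj A = cmat_adj A"
    "cmat_adj (cmat_adj A ** Y') = cmat_adj A ** Y'"
    using exists_inner_inverse_hermitian by blast
  define Z where "Z = cmat_adj Y'"
  have Z1: "A ** Z ** A = A"
    using arg_cong[OF Y'(1), of cmat_adj] by (simp add: Z_def cmat_adj_mult matrix_mul_assoc)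
  have Z2: "cmat_adj (Z ** A) = Z ** A"
    using arg_cong[OF Y'(2), of cmat_adj] by (simp add: Z_def cmat_adj_mult)
  define W where "W = Z ** A ** Y"
  have AW: "A ** W = A ** Y" by (simp add: W_def matrix_mul_assoc Z1)
  have WA: "W ** A = Z ** A" by (metis W_def Y(1) matrix_mul_assoc)
  have "A ** W ** A = A" by (simp add: AW Y(1))
  moreover have "W ** A ** W = Z ** (A ** Z ** A) ** Y" by (simp only: WA) (simp add: W_def matrix_mul_assoc)
  then have "W ** A ** W = W" by (simp add: Z1 W_def)
  ultimately have "penrose_inverse A W"
    by (simp add: penrose_inverse_def AW WA Y(2) Z2)
  then show ?thesis ..
qed

lemma penrose_inverse_unique:
  fixes A :: "complex^'n^'m"
  assumes "penrose_inverse A W1" "penrose_inverse A W2"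
  shows "W1 = W2"
proof -
  have 1: "A ** W1 ** A = A" "W1 ** A ** W1 = W1" "cmat_adj (A ** W1) = A ** W1"
    "cmat_adj (W1 ** A) = W1 ** A"
    using assms(1) by (simp_all add: penrose_inverse_def)
  have 2: "A ** W2 ** A = A" "W2 ** A ** W2 = W2" "cmat_adj (A ** W2) = A ** W2"
    "cmat_adj (W2 ** A) = W2 ** A"
    using assms(2) by (simp_all add: penrose_inverse_def)
  have "W1 = W1 ** cmat_adj (A ** W1)" using 1(2,3) by (simp add: matrix_mul_assoc)
  also have "\<dots> = W1 ** cmat_adj (A ** W2 ** A ** W1)" by (simp add: 2(1))
  also have "\<dots> = W1 ** cmat_adj (A ** W1) ** cmat_adj (A ** W2)"
    by (simp add: cmat_adj_mult matrix_mul_assoc)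
  also have "\<dots> = W1 ** A ** W2" by (simp add: 1(2,3) 2(3) matrix_mul_assoc)
  finally have W1: "W1 = W1 ** A ** W2" .
  have "W2 = cmat_adj (W2 ** A) ** W2" using 2(2,4) by simp
  also have "\<dots> = cmat_adj (W2 ** A ** W1 ** A) ** W2" by (metis 1(1) matrix_mul_assoc)
  also have "\<dots> = cmat_adj (W1 ** A) ** cmat_adj (W2 ** A) ** W2"
    by (simp add: cmat_adj_mult matrix_mul_assoc)
  also have "\<dots> = W1 ** A ** W2" by (metis 1(4) 2(2,4) matrix_mul_assoc)
  finally show ?thesis using W1 by simp
qed

lemma mode3_mode3: "mode3 P (mode3 Q C) = mode3 (P ** Q) C"
proof -
  have "(\<Sum>l\<in>UNIV. P $ k $ l * (\<Sum>m\<in>UNIV. Q $ l $ m * C $ m $ i $ j)) =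
        (\<Sum>m\<in>UNIV. (\<Sum>l\<in>UNIV. P $ k $ l * Q $ l $ m) * C $ m $ i $ j)" for k i j
    by (simp add: sum_distrib_left sum_distrib_right mult.assoc) (rule sum.swap)
  then show ?thesis unfolding mode3_def matrix_matrix_mult_def by (simp add: vec_eq_iff)
qed

lemma mode3_mat_1 [simp]: "mode3 (mat 1) C = C"
proof -
  have "(\<Sum>l\<in>UNIV. mat 1 $ k $ l * C $ l $ i $ j) = C $ k $ i $ j" for k i j
    by (simp add: mat_def if_distrib[where f="\<lambda>x. x * _"] cong del: if_weak_cong)
  then show ?thesis unfolding mode3_def by (simp add: vec_eq_iff)
qed

context
  fixes M :: "complex ^ 'n3::finite ^ 'n3"
  assumes M: "invertible M"
begin

lemma mode3_mode3_matrix_inv [simp]: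
  "mode3 M (mode3 (matrix_inv M) C) = C" "mode3 (matrix_inv M) (mode3 M C) = C"
  by (simp_all add: mode3_mode3 invertible_matrix_inv[OF M])

lemma tensor_eq_iff_slices: "C = D \<longleftrightarrow> (\<forall>k. mode3 M C $ k = mode3 M D $ k)"
  by (metis mode3_mode3_matrix_inv(2) vec_eq_iff)

lemma slice_mprod [simp]: "mode3 M (mprod M C D) $ k = mode3 M C $ k ** mode3 M D $ k"
  by (simp add: mprod_def)

lemma slice_tadj [simp]: "mode3 M (tadj M C) $ k = cmat_adj (mode3 M C $ k)"
  by (simp add: tadj_def)

lemma mprod_assoc: "mprod M (mprod M A B) C = mprod M A (mprod M B C)"
  by (simp add: tensor_eq_iff_slices matrix_mul_assoc)

lemma tadj_mprod: "tadj M (mprod M A B) = mprod M (tadj M B) (tadj M A)"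
  by (simp add: tensor_eq_iff_slices cmat_adj_mult)

lemma is_mp_inverse_iff_slices:
  "is_mp_inverse M A W \<longleftrightarrow> (\<forall>k. penrose_inverse (mode3 M A $ k) (mode3 M W $ k))"
  unfolding is_mp_inverse_def penrose_inverse_def tensor_eq_iff_slices by auto

lemma is_mp_inverse_mp_inverse: "is_mp_inverse M A (mp_inverse M A)"
  unfolding mp_inverse_def
proof (rule theI')
  define W where "W = mode3 (matrix_inv M) (\<chi> k. SOME w. penrose_inverse (mode3 M A $ k) w)"
  have "is_mp_inverse M A W"
    by (simp add: is_mp_inverse_iff_slices W_def someI_ex[OF exists_penrose_inverse])
  moreover have "W' = W" if "is_mp_inverse M A W'" for W'
    using that \<open>is_mp_inverse M A W\<close>
    by (auto simp: is_mp_inverse_iff_slices tensor_eq_iff_slices intro: penrose_inverse_unique)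
  ultimately show "\<exists>!W. is_mp_inverse M A W" by blast
qed

lemma mprod_tadj_tadj_mp_inverse:
  "mprod M A (mprod M (tadj M A) (mprod M (tadj M (mp_inverse M A)) C)) = mprod M A C"
proof -
  let ?W = "mp_inverse M A"
  have "mprod M (tadj M A) (tadj M ?W) = tadj M (mprod M ?W A)"
    by (simp add: tadj_mprod)
  also have "\<dots> = mprod M ?W A"
    using is_mp_inverse_mp_inverse[of A] by (simp add: is_mp_inverse_def)
  finally have "mprod M A (mprod M (tadj M A) (tadj M ?W)) = A"
    using is_mp_inverse_mp_inverse[of A] by (simp add: is_mp_inverse_def flip: mprod_assoc)
  then show ?thesis by (metis mprod_assoc)
qed

end

theorem theorem3p15:
  fixes M :: "complex ^ 'n3::finite ^ 'n3"
    and A :: "('n1::finite, 'n2::finite, 'n3) tensor"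
    and U V :: "('n2, 'n1, 'n3) tensor"
  assumes "invertible M"
    and "U \<in> one_star_inverses M A"
    and "V \<in> one_star_inverses M A"
  shows "mprod M (mprod M U (tadj M (mp_inverse M A))) V \<in> one_star_inverses M A"
proof -
  note assoc = mprod_assoc[OF \<open>invertible M\<close>]
  obtain G where G: "mprod M (mprod M A G) A = A" and U: "U = mprod M (mprod M G A) (tadj M A)"
    using assms(2) unfolding one_star_inverses_def inv1_def by blast
  obtain H where H: "mprod M (mprod M A H) A = A" and V: "V = mprod M (mprod M H A) (tadj M A)"
    using assms(3) unfolding one_star_inverses_def inv1_def by blast
  define X where "X = mprod M (mprod M G A) H"
  have "X \<in> inv1 M A"
    using G H by (simp add: inv1_def X_def assoc)
  moreover have "mprod M (mprod M U (tadj M (mp_inverse M A))) V = mprod M (mprod M X A) (tadj M A)"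
    by (simp add: U V X_def assoc mprod_tadj_tadj_mp_inverse[OF \<open>invertible M\<close>])
  ultimately show ?thesis
    unfolding one_star_inverses_def by blast
qed

end
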